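(* Let $T$ be a lifted graph, $F\colon T\to T$ a continuous sun-like map of degree 1, ${\cal P}$ a basic partition of $F$ and ${\cal G}$ its covering graph. (i) Let $\gamma_1,\gamma_2$ be two loops in ${\cal G}$ starting at the same vertex $\alpha$. If $r\in[\rho(\widetilde\gamma_1),\rho(\widetilde\gamma_2)]\cap\mathbb Q$, then there exists a loop $\gamma$ starting at $\alpha$ with $\rho(\widetilde\gamma)=r$. (ii) Let $\alpha$ be a vertex of ${\cal G}$ and, for every $n\ge0$, let $\gamma_n$ be a loop in ${\cal G}$ starting at $\alpha$. If $\lim_{n\to\infty}\rho(\widetilde\gamma_n)=s\in\mathbb R$, then there exists an infinite path $\bar\alpha=(\alpha_n)_{n\ge0}$ in ${\cal G}$ with $\alpha_0=\alpha$, $\alpha_n=\alpha$ for infinitely many $n$, and $\rho(\bar\alpha)=s$.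
   Context: A lifted graph is a connected topological space $T$ with a homeomorphism $h\colon\mathbb R\to h(\mathbb R)\subset T$ and a homeomorphism $\tau\colon T\to T$ such that $\tau(h(x))=h(x+1)$, the closure of each connected component of $T\setminus h(\mathbb R)$ is a topological finite graph meeting $h(\mathbb R)$ in exactly one point, and only finitely many such components have closure meeting $h([0,1])$. Identify $h(\mathbb R)$ with $\mathbb R$, write $x+m:=\tau^m(x)$; $r_{\mathbb R}\colon T\to\mathbb R$ is the identity on $\mathbb R$ and maps a component $C$ of $T\setminus\mathbb R$ to the point $\overline C\cap\mathbb R$. $F$ has degree 1 if $F(x+1)=F(x)+1$. Let $T_{\mathbb R}:=\overline{\bigcup_{n\ge0}F^n(\mathbb R)}$, $X:=\overline{T\setminus T_{\mathbb R}}\cap r_{\mathbb R}^{-1}([0,1))$. $F$ is sun-like if $(T\setminus T_{\mathbb R})\cap r_{\mathbb R}^{-1}([0,1))$ consists of finitely many intervals with pairwise disjoint closures $X^i$, $i\in\Lambda$ (branches), each a compact interval meeting $T_{\mathbb R}$ in one endpoint $\min X^i$ (fixing the order of $X^i$). A basic partition is a finite family ${\cal P}=\{X^i_j\}$ of pairwise disjoint nonempty compact intervals $X^i_1<\dots<X^i_{N_i}$ in $X^i$, with $\ell(X^i_j)\in\Lambda$, $p(X^i_j)\in\mathbb Z$, such that $F(X^i_j)\subset(X^{\ell(X^i_j)}+p(X^i_j))\cup\mathrm{Int}(T_{\mathbb R})$, $F(\min X^i_j)=\min X^{\ell(X^i_j)}+p(X^i_j)$, and $F(X\setminus\bigcup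 X^i_j)\cap(X+\mathbb Z)=\emptyset$. For $A_0,\dots,A_n\in{\cal P}$, $\langle A_0\dots A_n\rangle:=F^n(\{x\in T: F^i(x)\in A_i+\mathbb Z,\ 0\le i\le n\})\cap X$. $A_0\dots A_n\sim B_0\dots B_m$ iff for some $k\le\min(n,m)$, $A_{n-i}=B_{m-i}$ ($0\le i\le k$) and $\langle A_0\dots A_{n-k}\rangle=A_{n-k}=B_{m-k}=\langle B_0\dots B_{m-k}\rangle$. The covering graph ${\cal G}$: vertices are classes $A_0\dots A_n/\!\sim$ with $\langle A_0\dots A_n\rangle\ne\emptyset$; arrow $\alpha\to\beta$ iff $\alpha=A_0\dots A_n/\!\sim$, $\beta=A_0\dots A_nA_{n+1}/\!\sim$ for some $A_i\in{\cal P}$. The weight of an arrow $\alpha\to\beta$ is $W(\alpha\beta):=p(A)$ with $A\in{\cal P}$ the unique element containing $\langle\alpha\rangle$. A finite path $\alpha_0\dots\alpha_n$ ($\alpha_i\to\alpha_{i+1}$) has length $n$ and weight $W(\alpha_0\dots\alpha_n):=\sum_{i<n}W(\alpha_i\alpha_{i+1})$; a loop starting at $\alpha$ is a finite path of positive length with $\alpha_0=\alpha_n=\alpha$; $\widetilde\gamma$ denotes the infinite path obtained by concatenating the loop $\gamma$ with itself infinitely many times. For an infinite path $\bar\alpha=(\alpha_n)_{n\ge0}$, $\rho(\bar\alpha):=\lim_{n\to\infty}W(\alpha_0\dots\alpha_n)/n$ when the limit exists. *)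

theory Defs
  imports "HOL-Analysis.Analysis"
begin

definition finite_top_graph :: "'a::topological_space set \<Rightarrow> bool" where
  "finite_top_graph G \<longleftrightarrow> (\<exists>gs::(real \<Rightarrow> 'a) list.
     G = (\<Union>g\<in>set gs. g ` {0..1}) \<and>
     (\<forall>g\<in>set gs. (\<exists>g'. homeomorphism {0..1} (g ` {0..1}) g g')
                   \<and> closedin (top_of_set G) (g ` {0..1})) \<and>
     (\<forall>g\<in>set gs. \<forall>g'\<in>set gs. g \<noteq> g' \<longrightarrow>
         g ` {0..1} \<inter> g' ` {0..1} \<subseteq> {g 0, g 1} \<inter> {g' 0, g' 1}))"

text \<open>The whole type is the space T; h embeds the real line, tau is the translation.\<close>
definition lifted_graph :: "(real \<Rightarrow> 'a::topological_space) \<Rightarrow> ('a \<Rightarrow> 'a) \<Rightarrow> bool" where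
  "lifted_graph h \<tau> \<longleftrightarrow>
     connected (UNIV::'a set) \<and>
     (\<exists>h'. homeomorphism UNIV (range h) h h') \<and>
     (\<exists>\<tau>'. homeomorphism UNIV UNIV \<tau> \<tau>') \<and>
     (\<forall>x. \<tau> (h x) = h (x + 1)) \<and>
     (\<forall>x. x \<notin> range h \<longrightarrow>
        finite_top_graph (closure (connected_component_set (- range h) x)) \<and>
        (\<exists>!t. h t \<in> closure (connected_component_set (- range h) x))) \<and>
     finite {connected_component_set (- range h) x | x. x \<notin> range h \<and>
               closure (connected_component_set (- range h) x) \<inter> h ` {0..1} \<noteq> {}}"

text \<open>x + m := tau^m(x) for integer m.\<close>
definition tshift :: "('a \<Rightarrow> 'a) \<Rightarrow> int \<Rightarrow> 'a \<Rightarrow> 'a" where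
  "tshift \<tau> m = (if 0 \<le> m then \<tau> ^^ nat m else inv \<tau> ^^ nat (- m))"

text \<open>The retraction r_R : T -> R (values in R, i.e. parameters of h).\<close>
definition rR :: "(real \<Rightarrow> 'a::topological_space) \<Rightarrow> 'a \<Rightarrow> real" where
  "rR h x = (if x \<in> range h then inv h x
             else (THE t. h t \<in> closure (connected_component_set (- range h) x)))"

definition TR :: "(real \<Rightarrow> 'a::topological_space) \<Rightarrow> ('a \<Rightarrow> 'a) \<Rightarrow> 'a set" where
  "TR h F = closure (\<Union>n. (F ^^ n) ` range h)"

definition Xset :: "(real \<Rightarrow> 'a::topological_space) \<Rightarrow> ('a \<Rightarrow> 'a) \<Rightarrow> 'a set" where
  "Xset h F = closure (- TR h F) \<inter> {x. rR h x \<in> {0..<1}}"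

text \<open>Branches X^i = phi i ` {0..1}, with phi i a homeomorphism from [0,1] onto X^i,
  phi i 0 = min X^i (the order on X^i is the one transported by phi i).\<close>
definition sun_like :: "(real \<Rightarrow> 'a::topological_space) \<Rightarrow> ('a \<Rightarrow> 'a) \<Rightarrow> 'b set
                        \<Rightarrow> ('b \<Rightarrow> real \<Rightarrow> 'a) \<Rightarrow> bool" where
  "sun_like h F \<Lambda> \<phi> \<longleftrightarrow>
     finite \<Lambda> \<and>
     (- TR h F) \<inter> {x. rR h x \<in> {0..<1}} = (\<Union>i\<in>\<Lambda>. \<phi> i ` {0<..1}) \<and>
     (\<forall>i\<in>\<Lambda>. (\<exists>\<psi>. homeomorphism {0..1} (\<phi> i ` {0..1}) (\<phi> i) \<psi>) \<and>
               closure (\<phi> i ` {0<..1}) = \<phi> i ` {0..1} \<and>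
               \<phi> i ` {0..1} \<inter> TR h F = {\<phi> i 0}) \<and>
     (\<forall>i\<in>\<Lambda>. \<forall>j\<in>\<Lambda>. i \<noteq> j \<longrightarrow> \<phi> i ` {0..1} \<inter> \<phi> j ` {0..1} = {})"

definition basic_partition :: "(real \<Rightarrow> 'a::topological_space) \<Rightarrow> ('a \<Rightarrow> 'a) \<Rightarrow> ('a \<Rightarrow> 'a)
     \<Rightarrow> 'b set \<Rightarrow> ('b \<Rightarrow> real \<Rightarrow> 'a) \<Rightarrow> 'a set set \<Rightarrow> ('a set \<Rightarrow> 'b) \<Rightarrow> ('a set \<Rightarrow> int) \<Rightarrow> bool" where
  "basic_partition h \<tau> F \<Lambda> \<phi> P lab p \<longleftrightarrow>
     finite P \<and>
     (\<forall>A\<in>P. \<forall>B\<in>P. A \<noteq> B \<longrightarrow> A \<inter> B = {}) \<and>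
     (\<forall>A\<in>P. lab A \<in> \<Lambda> \<and>
        (\<exists>i\<in>\<Lambda>. \<exists>a b. 0 \<le> a \<and> a \<le> b \<and> b \<le> 1 \<and> A = \<phi> i ` {a..b} \<and>
              F (\<phi> i a) = tshift \<tau> (p A) (\<phi> (lab A) 0)) \<and>
        F ` A \<subseteq> (tshift \<tau> (p A) ` \<phi> (lab A) ` {0..1}) \<union> interior (TR h F)) \<and>
     F ` (Xset h F - \<Union>P) \<inter> (\<Union>m. tshift \<tau> m ` Xset h F) = {}"

text \<open>Cylinder <A_0 ... A_n> for a nonempty word w = [A_0,...,A_n].\<close>
definition cyl :: "(real \<Rightarrow> 'a::topological_space) \<Rightarrow> ('a \<Rightarrow> 'a) \<Rightarrow> ('a \<Rightarrow> 'a)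
                   \<Rightarrow> 'a set list \<Rightarrow> 'a set" where
  "cyl h \<tau> F w = (F ^^ (length w - 1)) `
      {x. \<forall>i<length w. (F ^^ i) x \<in> (\<Union>m. tshift \<tau> m ` (w ! i))} \<inter> Xset h F"

definition word_sim :: "(real \<Rightarrow> 'a::topological_space) \<Rightarrow> ('a \<Rightarrow> 'a) \<Rightarrow> ('a \<Rightarrow> 'a)
                        \<Rightarrow> 'a set list \<Rightarrow> 'a set list \<Rightarrow> bool" where
  "word_sim h \<tau> F w v \<longleftrightarrow>
     (let n = length w - 1; m = length v - 1 in
      \<exists>k\<le>min n m. (\<forall>i\<le>k. w ! (n - i) = v ! (m - i)) \<and>
        cyl h \<tau> F (take (n - k + 1) w) = w ! (n - k) \<and>
        w ! (n - k) = v ! (m - k) \<and>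
        v ! (m - k) = cyl h \<tau> F (take (m - k + 1) v))"

definition cls :: "(real \<Rightarrow> 'a::topological_space) \<Rightarrow> ('a \<Rightarrow> 'a) \<Rightarrow> ('a \<Rightarrow> 'a)
                   \<Rightarrow> 'a set set \<Rightarrow> 'a set list \<Rightarrow> 'a set list set" where
  "cls h \<tau> F P w = {v. v \<in> lists P \<and> v \<noteq> [] \<and> word_sim h \<tau> F w v}"

definition cg_vertices :: "(real \<Rightarrow> 'a::topological_space) \<Rightarrow> ('a \<Rightarrow> 'a) \<Rightarrow> ('a \<Rightarrow> 'a)
                   \<Rightarrow> 'a set set \<Rightarrow> 'a set list set set" where
  "cg_vertices h \<tau> F P =
     {cls h \<tau> F P w | w. w \<in> lists P \<and> w \<noteq> [] \<and> cyl h \<tau> F w \<noteq> {}}"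

definition cg_arrow :: "(real \<Rightarrow> 'a::topological_space) \<Rightarrow> ('a \<Rightarrow> 'a) \<Rightarrow> ('a \<Rightarrow> 'a)
                   \<Rightarrow> 'a set set \<Rightarrow> 'a set list set \<Rightarrow> 'a set list set \<Rightarrow> bool" where
  "cg_arrow h \<tau> F P \<alpha> \<beta> \<longleftrightarrow>
     (\<exists>w a. w \<in> lists P \<and> w \<noteq> [] \<and> a \<in> P \<and>
        cyl h \<tau> F w \<noteq> {} \<and> cyl h \<tau> F (w @ [a]) \<noteq> {} \<and>
        \<alpha> = cls h \<tau> F P w \<and> \<beta> = cls h \<tau> F P (w @ [a]))"

text \<open>Weight of an arrow out of alpha: p(A), A the element of P containing <alpha>
  (it depends only on the source vertex alpha).\<close>
definition cg_weight :: "(real \<Rightarrow> 'a::topological_space) \<Rightarrow> ('a \<Rightarrow> 'a) \<Rightarrow> ('a \<Rightarrow> 'a)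
                   \<Rightarrow> 'a set set \<Rightarrow> ('a set \<Rightarrow> int) \<Rightarrow> 'a set list set \<Rightarrow> int" where
  "cg_weight h \<tau> F P p \<alpha> = p (THE A. A \<in> P \<and> cyl h \<tau> F (SOME w. w \<in> \<alpha>) \<subseteq> A)"

definition cg_inf_path :: "(real \<Rightarrow> 'a::topological_space) \<Rightarrow> ('a \<Rightarrow> 'a) \<Rightarrow> ('a \<Rightarrow> 'a)
                   \<Rightarrow> 'a set set \<Rightarrow> (nat \<Rightarrow> 'a set list set) \<Rightarrow> bool" where
  "cg_inf_path h \<tau> F P s \<longleftrightarrow>
     (\<forall>n. s n \<in> cg_vertices h \<tau> F P \<and> cg_arrow h \<tau> F P (s n) (s (Suc n)))"

text \<open>A loop of length n > 0 starting at alpha, given as gamma 0, ..., gamma n.\<close>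
definition cg_loop :: "(real \<Rightarrow> 'a::topological_space) \<Rightarrow> ('a \<Rightarrow> 'a) \<Rightarrow> ('a \<Rightarrow> 'a)
                   \<Rightarrow> 'a set set \<Rightarrow> 'a set list set \<Rightarrow> (nat \<Rightarrow> 'a set list set) \<Rightarrow> nat \<Rightarrow> bool" where
  "cg_loop h \<tau> F P \<alpha> \<gamma> n \<longleftrightarrow>
     0 < n \<and> \<gamma> 0 = \<alpha> \<and> \<gamma> n = \<alpha> \<and>
     (\<forall>i\<le>n. \<gamma> i \<in> cg_vertices h \<tau> F P) \<and>
     (\<forall>i<n. cg_arrow h \<tau> F P (\<gamma> i) (\<gamma> (Suc i)))"

definition loop_repeat :: "(nat \<Rightarrow> 'v) \<Rightarrow> nat \<Rightarrow> nat \<Rightarrow> 'v" where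
  "loop_repeat \<gamma> n = (\<lambda>k. \<gamma> (k mod n))"

definition path_avg :: "(real \<Rightarrow> 'a::topological_space) \<Rightarrow> ('a \<Rightarrow> 'a) \<Rightarrow> ('a \<Rightarrow> 'a)
                   \<Rightarrow> 'a set set \<Rightarrow> ('a set \<Rightarrow> int) \<Rightarrow> (nat \<Rightarrow> 'a set list set) \<Rightarrow> nat \<Rightarrow> real" where
  "path_avg h \<tau> F P p s n = real_of_int (\<Sum>i<n. cg_weight h \<tau> F P p (s i)) / real n"

text \<open>rho of an infinite path (meaningful when the limit exists).\<close>
definition rho :: "(real \<Rightarrow> 'a::topological_space) \<Rightarrow> ('a \<Rightarrow> 'a) \<Rightarrow> ('a \<Rightarrow> 'a)
                   \<Rightarrow> 'a set set \<Rightarrow> ('a set \<Rightarrow> int) \<Rightarrow> (nat \<Rightarrow> 'a set list set) \<Rightarrow> real" where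
  "rho h \<tau> F P p s = lim (path_avg h \<tau> F P p s)"

end

theory Submission
  imports Defs
begin

text \<open>
  Only the combinatorics of the covering graph enters: the weight of an arrow depends on its
  source vertex alone, so \<open>\<rho>\<close> of a repeated loop is the mean weight of the loop, the Cesaro
  limit of a periodic sequence.

  (i) If \<open>r = a/b\<close> lies strictly between the means \<open>S\<^sub>1/n\<^sub>1\<close> and \<open>S\<^sub>2/n\<^sub>2\<close> of the two loops,
  running \<open>k\<^sub>1 = b S\<^sub>2 - a n\<^sub>2\<close> times around the first loop and then \<open>k\<^sub>2 = a n\<^sub>1 - b S\<^sub>1\<close> times
  around the second gives a loop of mean exactly \<open>r\<close>.

  (ii) Concatenate blocks, the \<open>k\<close>-th running around \<open>\<gamma>\<^sub>k\<close> so often that its length exceeds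
  \<open>k\<close> times the length of everything before it plus the fluctuation of the partial sums of
  \<open>\<gamma>\<^sub>k\<close>. At any time the deviation of the running average from \<open>s\<close> is then bounded by the
  deviations of the current and the previous loop means plus \<open>O(1/k)\<close>, so the averages
  converge to \<open>s\<close>; the path passes through \<open>\<alpha>\<close> at the start of every block.
\<close>

section \<open>Cesaro averages of periodic and block sequences\<close>

lemma sum_lessThan_add_split:
  fixes f :: "nat \<Rightarrow> 'a::comm_monoid_add"
  shows "(\<Sum>i<m + n. f i) = (\<Sum>i<m. f i) + (\<Sum>i<n. f (m + i))"
  by (induction n) (simp_all add: add.assoc)

lemma sum_lessThan_mult_mod:
  fixes f :: "nat \<Rightarrow> 'a::comm_semiring_1"
  shows "(\<Sum>i<q * n. f (i mod n)) = of_nat q * (\<Sum>i<n. f i)"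
proof (induction q)
  case (Suc q)
  have "(\<Sum>i<Suc q * n. f (i mod n)) = (\<Sum>i<q * n. f (i mod n)) + (\<Sum>i<n. f ((q * n + i) mod n))"
    using sum_lessThan_add_split[of "\<lambda>i. f (i mod n)" "q * n" n] by (simp add: add.commute)
  also have "(\<Sum>i<n. f ((q * n + i) mod n)) = (\<Sum>i<n. f i)"
    by (rule sum.cong) auto
  finally show ?case
    using Suc by (simp add: algebra_simps)
qed simp

lemma sum_lessThan_mod:
  fixes f :: "nat \<Rightarrow> 'a::comm_semiring_1"
  shows "(\<Sum>i<m. f (i mod n)) = of_nat (m div n) * (\<Sum>i<n. f i) + (\<Sum>i<m mod n. f i)"
proof -
  have "(\<Sum>i<m. f (i mod n)) = (\<Sum>i<m div n * n + m mod n. f (i mod n))"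
    by simp
  also have "\<dots> = of_nat (m div n) * (\<Sum>i<n. f i) + (\<Sum>i<m mod n. f ((m div n * n + i) mod n))"
    by (simp only: sum_lessThan_add_split sum_lessThan_mult_mod)
  also have "(\<Sum>i<m mod n. f ((m div n * n + i) mod n)) = (\<Sum>i<m mod n. f i)"
  proof (rule sum.cong)
    fix i assume "i \<in> {..<m mod n}"
    then have "i mod n = i"
      by (cases "n = 0") (auto intro: mod_less less_trans[OF _ mod_less_divisor])
    then show "f ((m div n * n + i) mod n) = f i"
      by simp
  qed simp
  finally show ?thesis .
qed

lemma sum_lessThan_mod_deviation:
  fixes f :: "nat \<Rightarrow> real"
  assumes "0 < n"
  shows "\<bar>(\<Sum>i<m. f (i mod n)) - real m * (\<Sum>i<n. f i) / real n\<bar>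
           \<le> (\<Sum>i<n. \<bar>f i\<bar>) + \<bar>\<Sum>i<n. f i\<bar>"
proof -
  define S where "S = (\<Sum>i<n. f i)"
  have r_less: "m mod n < n"
    using assms by simp
  have "real m = real (m div n) * real n + real (m mod n)"
    by (metis div_mult_mod_eq of_nat_add of_nat_mult)
  then have "real m * S / real n = real (m div n) * S + real (m mod n) / real n * S"
    using assms by (simp add: field_simps)
  then have split: "(\<Sum>i<m. f (i mod n)) - real m * S / real n
                  = (\<Sum>i<m mod n. f i) - real (m mod n) / real n * S"
    by (simp add: sum_lessThan_mod S_def)
  have rest: "\<bar>\<Sum>i<m mod n. f i\<bar> \<le> (\<Sum>i<n. \<bar>f i\<bar>)"
    using r_less by (intro order_trans[OF sum_abs] sum_mono2) auto
  have "real (m mod n) / real n \<le> 1"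
    using r_less by simp
  then have "\<bar>real (m mod n) / real n * S\<bar> \<le> \<bar>S\<bar>"
    using mult_left_le_one_le[of "\<bar>S\<bar>" "real (m mod n) / real n"] by (simp add: abs_mult)
  with rest have "\<bar>(\<Sum>i<m. f (i mod n)) - real m * S / real n\<bar> \<le> (\<Sum>i<n. \<bar>f i\<bar>) + \<bar>S\<bar>"
    unfolding split by linarith
  then show ?thesis
    by (simp only: S_def)
qed

lemma averages_tendsto_of_deviation:
  fixes f g :: "nat \<Rightarrow> real"
  assumes "g \<longlonglongrightarrow> 0"
    and "eventually (\<lambda>m. \<bar>f m - real m * c\<bar> \<le> real m * g m) sequentially"
  shows "(\<lambda>m. f m / real m) \<longlonglongrightarrow> c"
proof -
  have "(\<lambda>m. (f m - real m * c) / real m) \<longlonglongrightarrow> 0"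
  proof (rule Lim_null_comparison)
    show "eventually (\<lambda>m. norm ((f m - real m * c) / real m) \<le> g m) sequentially"
      using assms(2) eventually_gt_at_top[of 0]
      by eventually_elim (simp add: divide_le_eq abs_divide mult.commute)
  qed fact
  then have "(\<lambda>m. (f m - real m * c) / real m + c) \<longlonglongrightarrow> c"
    using tendsto_add[OF _ tendsto_const] by fastforce
  moreover have "eventually (\<lambda>m. (f m - real m * c) / real m + c = f m / real m) sequentially"
    using eventually_gt_at_top[of 0] by eventually_elim (simp add: field_simps)
  ultimately show ?thesis
    using Lim_transform_eventually by fastforce
qed

lemma periodic_averages_tendsto:
  fixes f :: "nat \<Rightarrow> real"
  assumes "0 < n"
  shows "(\<lambda>m. (\<Sum>i<m. f (i mod n)) / real m) \<longlonglongrightarrow> (\<Sum>i<n. f i) / real n"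
proof (rule averages_tendsto_of_deviation)
  define B where "B = (\<Sum>i<n. \<bar>f i\<bar>) + \<bar>\<Sum>i<n. f i\<bar>"
  show "(\<lambda>m. B / real m) \<longlonglongrightarrow> 0"
    by (rule lim_const_over_n)
  show "eventually (\<lambda>m. \<bar>(\<Sum>i<m. f (i mod n)) - real m * ((\<Sum>i<n. f i) / real n)\<bar>
                        \<le> real m * (B / real m)) sequentially"
    using eventually_gt_at_top[of 0]
    by eventually_elim (use sum_lessThan_mod_deviation[OF assms, of f] in \<open>simp add: B_def\<close>)
qed

definition block_index :: "(nat \<Rightarrow> nat) \<Rightarrow> nat \<Rightarrow> nat" where
  "block_index T t = (LEAST k. t < T (Suc k))"

lemma block_index_bounds:
  assumes "strict_mono T" "T 0 = 0"
  shows "T (block_index T t) \<le> t" "t < T (Suc (block_index T t))"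
proof -
  have "t < T (Suc t)"
    using strict_mono_imp_increasing[OF assms(1), of "Suc t"] by simp
  then show "t < T (Suc (block_index T t))"
    unfolding block_index_def by (rule LeastI)
  show "T (block_index T t) \<le> t"
  proof (cases "block_index T t")
    case (Suc k)
    then have "\<not> t < T (Suc k)"
      using not_less_Least[of k "\<lambda>k. t < T (Suc k)"] unfolding block_index_def by simp
    then show ?thesis
      using Suc by simp
  qed (use assms(2) in simp)
qed

lemma block_index_eqI:
  assumes "strict_mono T" "T k \<le> t" "t < T (Suc k)"
  shows "block_index T t = k"
  unfolding block_index_def
proof (rule Least_equality)
  fix k' assume k': "t < T (Suc k')"
  show "k \<le> k'"
  proof (rule ccontr)
    assume "\<not> k \<le> k'"
    then have "T (Suc k') \<le> T k"
      using strict_mono_less_eq[OF assms(1)] by simp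
    then show False
      using k' assms(2) by simp
  qed
qed fact

lemma block_index_ge:
  assumes "strict_mono T" "T 0 = 0" "T k \<le> t"
  shows "k \<le> block_index T t"
proof (rule ccontr)
  assume "\<not> k \<le> block_index T t"
  then have "T (Suc (block_index T t)) \<le> T k"
    using strict_mono_less_eq[OF assms(1)] by simp
  then show False
    using block_index_bounds(2)[OF assms(1,2), of t] assms(3) by simp
qed

lemma filterlim_block_index:
  assumes "strict_mono T" "T 0 = 0"
  shows "filterlim (block_index T) at_top sequentially"
  unfolding filterlim_at_top
proof
  fix k
  show "eventually (\<lambda>t. k \<le> block_index T t) sequentially"
    using eventually_ge_at_top[of "T k"] by eventually_elim (rule block_index_ge[OF assms])
qed

definition block_concat :: "(nat \<Rightarrow> nat) \<Rightarrow> (nat \<Rightarrow> nat \<Rightarrow> 'v) \<Rightarrow> nat \<Rightarrow> 'v" where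
  "block_concat T u t = u (block_index T t) (t - T (block_index T t))"

lemma block_concat_shift:
  assumes "strict_mono T" "j < T (Suc k) - T k"
  shows "block_concat T u (T k + j) = u k j"
  using assms block_index_eqI[OF assms(1), of k "T k + j"] by (simp add: block_concat_def)

locale block_decomposition =
  fixes T L :: "nat \<Rightarrow> nat" and x a C :: "nat \<Rightarrow> real"
  assumes T_0: "T 0 = 0" and T_Suc: "\<And>k. T (Suc k) = T k + L k" and L_pos: "\<And>k. 0 < L k"
    and block_sum: "\<And>k. (\<Sum>i<L k. x (T k + i)) = real (L k) * a k"
    and block_deviation: "\<And>k j. j < L k \<Longrightarrow> \<bar>(\<Sum>i<j. x (T k + i)) - real j * a k\<bar> \<le> C k"
    and growth: "\<And>k. real (Suc k) * (real (T k) + C (Suc k)) \<le> real (L k)"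
begin

lemma strict_mono_T: "strict_mono T"
  by (simp add: strict_mono_Suc_iff T_Suc L_pos)

lemma C_nonneg: "0 \<le> C k"
  using block_deviation[of 0 k] L_pos[of k] by simp

lemma real_T: "real (T k) = (\<Sum>l<k. real (L l))"
  by (induction k) (simp_all add: T_0 T_Suc)

lemma sum_lessThan_T: "(\<Sum>i<T k. x i) = (\<Sum>l<k. real (L l) * a l)"
  by (induction k) (simp_all add: T_0 T_Suc sum_lessThan_add_split block_sum)

lemma deviation_split:
  assumes "t = T k + j"
  shows "(\<Sum>i<t. x i) - real t * s
    = (\<Sum>l<k. real (L l) * (a l - s)) + ((\<Sum>i<j. x (T k + i)) - real j * a k) + real j * (a k - s)"
proof -
  have "(\<Sum>i<t. x i) = (\<Sum>l<k. real (L l) * a l) + (\<Sum>i<j. x (T k + i))"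
    unfolding assms sum_lessThan_add_split sum_lessThan_T ..
  moreover have "real t * s = (\<Sum>l<k. real (L l) * s) + real j * s"
    unfolding assms of_nat_add real_T by (simp add: sum_distrib_right distrib_right)
  moreover have "(\<Sum>l<k. real (L l) * (a l - s)) = (\<Sum>l<k. real (L l) * a l) - (\<Sum>l<k. real (L l) * s)"
    by (simp add: right_diff_distrib sum_subtractf)
  ultimately show ?thesis
    by (simp add: algebra_simps)
qed

lemma deviation_bound:
  assumes B: "\<And>k. \<bar>a k - s\<bar> \<le> B" and t: "T 1 \<le> t"
  defines "k \<equiv> block_index T t"
  shows "\<bar>(\<Sum>i<t. x i) - real t * s\<bar> \<le> real t * ((B + 1) / real k + \<bar>a (k - 1) - s\<bar> + \<bar>a k - s\<bar>)"
proof -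
  obtain k' where k': "k = Suc k'"
    using block_index_ge[OF strict_mono_T T_0 t] not0_implies_Suc unfolding k_def by fastforce
  define j where "j = t - T k"
  have tj: "t = T k + j" and j: "j < L k"
    using block_index_bounds[OF strict_mono_T T_0, of t] by (auto simp: k_def j_def T_Suc)
  have t_real: "real t = real (T k') + real (L k') + real j"
    using tj by (simp add: k' T_Suc)
  have "\<bar>\<Sum>l<k. real (L l) * (a l - s)\<bar> \<le> (\<Sum>l<k. real (L l) * \<bar>a l - s\<bar>)"
    by (rule order_trans[OF sum_abs]) (simp add: abs_mult)
  also have "\<dots> = (\<Sum>l<k'. real (L l) * \<bar>a l - s\<bar>) + real (L k') * \<bar>a k' - s\<bar>"
    by (simp add: k')
  also have "(\<Sum>l<k'. real (L l) * \<bar>a l - s\<bar>) \<le> (\<Sum>l<k'. real (L l) * B)"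
    using B by (intro sum_mono mult_left_mono) auto
  also have "(\<Sum>l<k'. real (L l) * B) = B * real (T k')"
    by (simp add: real_T sum_distrib_left mult.commute)
  also have "real (L k') * \<bar>a k' - s\<bar> \<le> real t * \<bar>a k' - s\<bar>"
    using t_real by (intro mult_right_mono) auto
  finally have completed: "\<bar>\<Sum>l<k. real (L l) * (a l - s)\<bar> \<le> B * real (T k') + real t * \<bar>a k' - s\<bar>"
    by simp
  have current: "\<bar>(\<Sum>i<j. x (T k + i)) - real j * a k\<bar> + \<bar>real j * (a k - s)\<bar> \<le> C k + real t * \<bar>a k - s\<bar>"
    using block_deviation[OF j] mult_right_mono[of "real j" "real t" "\<bar>a k - s\<bar>"] t_real
    by (simp add: abs_mult)
  have "0 \<le> B"
    using B[of 0] by linarith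
  then have "real k * (B * real (T k') + C k) \<le> (B + 1) * (real k * (real (T k') + C k))"
    using C_nonneg[of k] by (simp add: algebra_simps)
  also have "\<dots> \<le> (B + 1) * real t"
    using growth[of k'] t_real \<open>0 \<le> B\<close> by (intro mult_left_mono) (auto simp: k')
  finally have "B * real (T k') + C k \<le> (B + 1) / real k * real t"
    using k' by (simp add: field_simps)
  moreover have "\<bar>(\<Sum>i<t. x i) - real t * s\<bar> \<le> \<bar>\<Sum>l<k. real (L l) * (a l - s)\<bar>
      + \<bar>(\<Sum>i<j. x (T k + i)) - real j * a k\<bar> + \<bar>real j * (a k - s)\<bar>"
    unfolding deviation_split[OF tj] by arith
  moreover have "real t * ((B + 1) / real k + \<bar>a (k - 1) - s\<bar> + \<bar>a k - s\<bar>)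
      = (B + 1) / real k * real t + real t * \<bar>a k' - s\<bar> + real t * \<bar>a k - s\<bar>"
    using k' by (simp add: algebra_simps)
  ultimately show ?thesis
    using completed current by linarith
qed

theorem cesaro_averages_tendsto:
  assumes "a \<longlonglongrightarrow> s"
  shows "(\<lambda>t. (\<Sum>i<t. x i) / real t) \<longlonglongrightarrow> s"
proof -
  have deviation_lim: "(\<lambda>k. \<bar>a k - s\<bar>) \<longlonglongrightarrow> 0"
    using tendsto_rabs_zero[OF LIM_zero[OF assms]] .
  then have "Bseq (\<lambda>k. \<bar>a k - s\<bar>)"
    by (rule convergent_imp_Bseq[OF convergentI])
  then obtain B where B: "\<forall>k. \<bar>a k - s\<bar> \<le> B"
    by (auto elim!: BseqE)
  define g where "g k = (B + 1) / real k + \<bar>a (k - 1) - s\<bar> + \<bar>a k - s\<bar>" for k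
  have "(\<lambda>k. \<bar>a (k - 1) - s\<bar>) \<longlonglongrightarrow> 0"
    by (rule LIMSEQ_imp_Suc) (simp add: deviation_lim)
  then have "g \<longlonglongrightarrow> 0"
    unfolding g_def using tendsto_add[OF tendsto_add[OF lim_const_over_n] deviation_lim] by simp
  show ?thesis
  proof (rule averages_tendsto_of_deviation)
    show "(\<lambda>t. g (block_index T t)) \<longlonglongrightarrow> 0"
      by (rule filterlim_compose[OF \<open>g \<longlonglongrightarrow> 0\<close> filterlim_block_index[OF strict_mono_T T_0]])
    show "\<forall>\<^sub>F t in sequentially. \<bar>(\<Sum>i<t. x i) - real t * s\<bar> \<le> real t * g (block_index T t)"
      by (intro eventually_mono[OF eventually_ge_at_top[of "T 1"]]) (simp only: g_def deviation_bound[OF B[rule_format]])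
  qed
qed

end

section \<open>Loops and infinite paths in a graph\<close>

definition graph_loop :: "'v set \<Rightarrow> ('v \<Rightarrow> 'v \<Rightarrow> bool) \<Rightarrow> 'v \<Rightarrow> (nat \<Rightarrow> 'v) \<Rightarrow> nat \<Rightarrow> bool" where
  "graph_loop V E \<alpha> \<gamma> n \<longleftrightarrow>
     0 < n \<and> \<gamma> 0 = \<alpha> \<and> \<gamma> n = \<alpha> \<and> (\<forall>i\<le>n. \<gamma> i \<in> V) \<and> (\<forall>i<n. E (\<gamma> i) (\<gamma> (Suc i)))"

definition loop_average :: "('v \<Rightarrow> real) \<Rightarrow> (nat \<Rightarrow> 'v) \<Rightarrow> nat \<Rightarrow> real" where
  "loop_average w \<gamma> n = (\<Sum>i<n. w (\<gamma> i)) / real n"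

definition loop_append :: "(nat \<Rightarrow> 'v) \<Rightarrow> nat \<Rightarrow> (nat \<Rightarrow> 'v) \<Rightarrow> nat \<Rightarrow> 'v" where
  "loop_append \<gamma>1 n1 \<gamma>2 i = (if i \<le> n1 then \<gamma>1 i else \<gamma>2 (i - n1))"

lemma loop_repeat_in_vertices:
  assumes "graph_loop V E \<alpha> \<gamma> n"
  shows "loop_repeat \<gamma> n i \<in> V"
  using assms by (simp add: graph_loop_def loop_repeat_def)

lemma loop_repeat_arrow:
  assumes "graph_loop V E \<alpha> \<gamma> n"
  shows "E (loop_repeat \<gamma> n i) (loop_repeat \<gamma> n (Suc i))"
proof -
  have loop: "0 < n" "\<gamma> 0 = \<alpha>" "\<gamma> n = \<alpha>" "\<forall>i<n. E (\<gamma> i) (\<gamma> (Suc i))"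
    using assms unfolding graph_loop_def by auto
  have "\<gamma> (Suc i mod n) = \<gamma> (Suc (i mod n))"
    using loop(2,3) by (simp add: mod_Suc)
  then show ?thesis
    using loop(1,4) by (simp add: loop_repeat_def)
qed

lemma graph_loop_repeat:
  assumes "graph_loop V E \<alpha> \<gamma> n" "0 < k"
  shows "graph_loop V E \<alpha> (loop_repeat \<gamma> n) (k * n)"
  using assms loop_repeat_in_vertices[OF assms(1)] loop_repeat_arrow[OF assms(1)]
  by (simp add: graph_loop_def loop_repeat_def)

lemma sum_loop_repeat:
  fixes w :: "'v \<Rightarrow> 'a::comm_semiring_1"
  shows "(\<Sum>i<k * n. w (loop_repeat \<gamma> n i)) = of_nat k * (\<Sum>i<n. w (\<gamma> i))"
  unfolding loop_repeat_def by (rule sum_lessThan_mult_mod)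

lemma loop_repeat_averages_tendsto:
  assumes "graph_loop V E \<alpha> \<gamma> n"
  shows "(\<lambda>m. (\<Sum>i<m. w (loop_repeat \<gamma> n i)) / real m) \<longlonglongrightarrow> loop_average w \<gamma> n"
  using periodic_averages_tendsto[of n "\<lambda>i. w (\<gamma> i)"] assms
  by (simp add: graph_loop_def loop_repeat_def loop_average_def)

lemma graph_loop_append:
  assumes "graph_loop V E \<alpha> \<gamma>1 n1" "graph_loop V E \<alpha> \<gamma>2 n2"
  shows "graph_loop V E \<alpha> (loop_append \<gamma>1 n1 \<gamma>2) (n1 + n2)"
  unfolding graph_loop_def
proof (intro conjI allI impI)
  fix i
  show "i \<le> n1 + n2 \<Longrightarrow> loop_append \<gamma>1 n1 \<gamma>2 i \<in> V"
    using assms by (auto simp: graph_loop_def loop_append_def)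
  assume "i < n1 + n2"
  then show "E (loop_append \<gamma>1 n1 \<gamma>2 i) (loop_append \<gamma>1 n1 \<gamma>2 (Suc i))"
    using assms by (cases "i < n1") (auto simp: graph_loop_def loop_append_def Suc_diff_le)
qed (use assms in \<open>auto simp: graph_loop_def loop_append_def\<close>)

lemma sum_loop_append:
  assumes "graph_loop V E \<alpha> \<gamma>1 n1" "graph_loop V E \<alpha> \<gamma>2 n2"
  shows "(\<Sum>i<n1 + n2. w (loop_append \<gamma>1 n1 \<gamma>2 i)) = (\<Sum>i<n1. w (\<gamma>1 i)) + (\<Sum>i<n2. w (\<gamma>2 i))"
proof -
  have "(\<Sum>i<n2. w (loop_append \<gamma>1 n1 \<gamma>2 (n1 + i))) = (\<Sum>i<n2. w (\<gamma>2 i))"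
    by (rule sum.cong) (use assms in \<open>auto simp: graph_loop_def loop_append_def\<close>)
  then show ?thesis
    by (simp add: sum_lessThan_add_split loop_append_def)
qed

lemma rational_weighted_mediant:
  fixes S1 S2 :: int and n1 n2 :: nat and r :: real
  assumes "r \<in> \<rat>" "0 < n1" "0 < n2"
    and "of_int S1 / real n1 < r" "r < of_int S2 / real n2"
  obtains k1 k2 :: nat
  where "0 < k1" "0 < k2" "of_int (int k1 * S1 + int k2 * S2) / real (k1 * n1 + k2 * n2) = r"
proof -
  obtain a b :: int where b: "0 < b" and r: "r = of_int a / of_int b"
    using Rats_cases'[OF assms(1)] by metis
  have "real_of_int (b * S1) < real_of_int (a * int n1)"
    using assms(2,4) b unfolding r by (simp add: field_simps)
  moreover have "real_of_int (a * int n2) < real_of_int (b * S2)"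
    using assms(3,5) b unfolding r by (simp add: field_simps)
  ultimately have D1: "0 < b * S2 - a * int n2" and D2: "0 < a * int n1 - b * S1"
    unfolding of_int_less_iff by simp_all
  define k1 where "k1 = nat (b * S2 - a * int n2)"
  define k2 where "k2 = nat (a * int n1 - b * S1)"
  have k: "0 < k1" "0 < k2"
    using D1 D2 by (simp_all add: k1_def k2_def)
  \<comment> \<open>both sides of this identity equal a b (n1 S2 - n2 S1)\<close>
  have "b * (int k1 * S1 + int k2 * S2) = a * int (k1 * n1 + k2 * n2)"
    using D1 D2 by (simp add: k1_def k2_def algebra_simps)
  then have "real_of_int b * of_int (int k1 * S1 + int k2 * S2) = of_int a * real (k1 * n1 + k2 * n2)"
    by (metis of_int_mult of_int_of_nat_eq)
  moreover have "0 < real (k1 * n1 + k2 * n2)"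
    using k assms(2) by (simp only: of_nat_0_less_iff) simp
  ultimately have "of_int (int k1 * S1 + int k2 * S2) / real (k1 * n1 + k2 * n2) = r"
    using b unfolding r by (simp add: field_simps)
  with k show ?thesis
    using that by blast
qed

lemma graph_loop_with_rational_average:
  fixes w :: "'v \<Rightarrow> int"
  assumes loop1: "graph_loop V E \<alpha> \<gamma>1 n1" and loop2: "graph_loop V E \<alpha> \<gamma>2 n2" and "r \<in> \<rat>"
    and "loop_average (\<lambda>v. of_int (w v)) \<gamma>1 n1 \<le> r" "r \<le> loop_average (\<lambda>v. of_int (w v)) \<gamma>2 n2"
  obtains \<gamma> n where "graph_loop V E \<alpha> \<gamma> n" "loop_average (\<lambda>v. of_int (w v)) \<gamma> n = r"
proof (cases "loop_average (\<lambda>v. of_int (w v)) \<gamma>1 n1 = r \<or> loop_average (\<lambda>v. of_int (w v)) \<gamma>2 n2 = r")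
  case True
  then show ?thesis
    using that loop1 loop2 by blast
next
  case False
  define S1 where "S1 = (\<Sum>i<n1. w (\<gamma>1 i))"
  define S2 where "S2 = (\<Sum>i<n2. w (\<gamma>2 i))"
  have avg: "loop_average (\<lambda>v. of_int (w v)) \<gamma>1 n1 = of_int S1 / real n1"
    "loop_average (\<lambda>v. of_int (w v)) \<gamma>2 n2 = of_int S2 / real n2"
    by (simp_all add: loop_average_def S1_def S2_def)
  have n: "0 < n1" "0 < n2"
    using loop1 loop2 by (simp_all add: graph_loop_def)
  have "of_int S1 / real n1 < r" "r < of_int S2 / real n2"
    using False assms(4,5) unfolding avg by auto
  then obtain k1 k2 where k: "0 < k1" "0 < k2"
    and mediant: "of_int (int k1 * S1 + int k2 * S2) / real (k1 * n1 + k2 * n2) = r"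
    by (rule rational_weighted_mediant[OF \<open>r \<in> \<rat>\<close> n])
  define \<gamma> where "\<gamma> = loop_append (loop_repeat \<gamma>1 n1) (k1 * n1) (loop_repeat \<gamma>2 n2)"
  have repeats: "graph_loop V E \<alpha> (loop_repeat \<gamma>1 n1) (k1 * n1)" "graph_loop V E \<alpha> (loop_repeat \<gamma>2 n2) (k2 * n2)"
    using graph_loop_repeat[OF loop1 k(1)] graph_loop_repeat[OF loop2 k(2)] by simp_all
  have "(\<Sum>i<k1 * n1 + k2 * n2. w (\<gamma> i)) = int k1 * S1 + int k2 * S2"
    unfolding \<gamma>_def sum_loop_append[OF repeats] sum_loop_repeat S1_def S2_def ..
  then have "loop_average (\<lambda>v. of_int (w v)) \<gamma> (k1 * n1 + k2 * n2) = r"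
    using mediant by (simp add: loop_average_def flip: of_int_sum)
  then show ?thesis
    using that graph_loop_append[OF repeats] unfolding \<gamma>_def by blast
qed

lemma block_concat_loops_path:
  assumes loops: "\<And>k. graph_loop V E \<alpha> (\<gamma> k) (N k)" and T: "strict_mono T" "T 0 = 0"
    and dvd: "\<And>k. N k dvd T (Suc k) - T k"
  defines "\<sigma> \<equiv> block_concat T (\<lambda>k. loop_repeat (\<gamma> k) (N k))"
  shows "\<sigma> t \<in> V" "E (\<sigma> t) (\<sigma> (Suc t))" "\<sigma> (T m) = \<alpha>"
proof -
  have gap: "0 < T (Suc k) - T k" for k
    using strict_monoD[OF T(1), of k "Suc k"] by simp
  have shift: "\<sigma> (T k + j) = loop_repeat (\<gamma> k) (N k) j" if "j < T (Suc k) - T k" for k j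
    using block_concat_shift[OF T(1) that] unfolding \<sigma>_def .
  show start: "\<sigma> (T m) = \<alpha>" for m
    using shift[OF gap, of m] loops[of m] by (simp add: graph_loop_def loop_repeat_def)
  define k where "k = block_index T t"
  define j where "j = t - T k"
  have t: "t = T k + j" and j: "j < T (Suc k) - T k"
    using block_index_bounds[OF T, of t] by (auto simp: k_def j_def)
  have "\<sigma> (Suc t) = loop_repeat (\<gamma> k) (N k) (Suc j)"
  proof (cases "Suc j < T (Suc k) - T k")
    case True
    then show ?thesis
      using shift t by (metis add_Suc_right)
  next
    case False
    then have "Suc j = T (Suc k) - T k"
      using j by simp
    then have "Suc t = T (Suc k)" and "N k dvd Suc j"
      using t dvd[of k] gap[of k] by simp_all
    then show ?thesis
      using start[of "Suc k"] loops[of k] by (simp add: loop_repeat_def graph_loop_def)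
  qed
  moreover have "\<sigma> t = loop_repeat (\<gamma> k) (N k) j"
    using shift[OF j] t by simp
  ultimately show "\<sigma> t \<in> V" "E (\<sigma> t) (\<sigma> (Suc t))"
    using loop_repeat_in_vertices[OF loops] loop_repeat_arrow[OF loops] by simp_all
qed

lemma infinite_path_through_loops:
  fixes w :: "'v \<Rightarrow> real"
  assumes loops: "\<And>k. graph_loop V E \<alpha> (\<gamma> k) (N k)"
    and lim: "(\<lambda>k. loop_average w (\<gamma> k) (N k)) \<longlonglongrightarrow> s"
  obtains \<sigma> where "\<And>t. \<sigma> t \<in> V" "\<And>t. E (\<sigma> t) (\<sigma> (Suc t))" "\<sigma> 0 = \<alpha>" "\<exists>\<^sub>\<infinity>t. \<sigma> t = \<alpha>"
    "(\<lambda>t. (\<Sum>i<t. w (\<sigma> i)) / real t) \<longlonglongrightarrow> s"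
proof -
  define C where "C k = (\<Sum>i<N k. \<bar>w (\<gamma> k i)\<bar>) + \<bar>\<Sum>i<N k. w (\<gamma> k i)\<bar>" for k
  \<comment> \<open>the k-th block repeats the k-th loop so often that it dwarfs everything before it\<close>
  define T where "T = rec_nat 0 (\<lambda>k Tk. Tk + Suc k * (Tk + nat \<lceil>C (Suc k)\<rceil> + 1) * N k)"
  define m where "m k = Suc k * (T k + nat \<lceil>C (Suc k)\<rceil> + 1)" for k
  have N_pos: "0 < N k" for k
    using loops[of k] by (simp add: graph_loop_def)
  have T_Suc: "T (Suc k) = T k + m k * N k" for k
    by (simp add: T_def m_def)
  have T: "strict_mono T" "T 0 = 0"
    using N_pos by (simp_all add: strict_mono_Suc_iff T_Suc m_def T_def)
  define \<sigma> where "\<sigma> = block_concat T (\<lambda>k. loop_repeat (\<gamma> k) (N k))"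
  have "N k dvd T (Suc k) - T k" for k
    by (simp add: T_Suc)
  note path = block_concat_loops_path[OF loops T this, folded \<sigma>_def]
  have shift: "\<sigma> (T k + j) = \<gamma> k (j mod N k)" if "j < m k * N k" for k j
    using block_concat_shift[OF T(1)] that by (simp add: \<sigma>_def loop_repeat_def T_Suc)
  interpret block_decomposition T "\<lambda>k. m k * N k" "\<lambda>t. w (\<sigma> t)" "\<lambda>k. loop_average w (\<gamma> k) (N k)" C
  proof
    fix k
    have "(\<Sum>i<m k * N k. w (\<sigma> (T k + i))) = (\<Sum>i<m k * N k. w (\<gamma> k (i mod N k)))"
      by (rule sum.cong) (simp_all add: shift)
    also have "\<dots> = real (m k * N k) * loop_average w (\<gamma> k) (N k)"
      using sum_lessThan_mult_mod[of "\<lambda>i. w (\<gamma> k i)" "N k" "m k"] N_pos[of k]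
      by (simp add: loop_average_def)
    finally show "(\<Sum>i<m k * N k. w (\<sigma> (T k + i))) = real (m k * N k) * loop_average w (\<gamma> k) (N k)" .
    fix j assume "j < m k * N k"
    then have "(\<Sum>i<j. w (\<sigma> (T k + i))) = (\<Sum>i<j. w (\<gamma> k (i mod N k)))"
      by (intro sum.cong) (simp_all add: shift)
    then show "\<bar>(\<Sum>i<j. w (\<sigma> (T k + i))) - real j * loop_average w (\<gamma> k) (N k)\<bar> \<le> C k"
      using sum_lessThan_mod_deviation[OF N_pos[of k], of "\<lambda>i. w (\<gamma> k i)" j]
      by (simp add: C_def loop_average_def)
  next
    fix k
    have "real (Suc k) * (real (T k) + C (Suc k))
        \<le> real (Suc k) * (real (T k) + real (nat \<lceil>C (Suc k)\<rceil>) + 1)"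
      using real_nat_ceiling_ge[of "C (Suc k)"] by (intro mult_left_mono) auto
    also have "\<dots> = real (m k)"
      by (simp add: m_def algebra_simps)
    also have "\<dots> \<le> real (m k * N k)"
      using N_pos[of k] by (simp del: of_nat_mult)
    finally show "real (Suc k) * (real (T k) + C (Suc k)) \<le> real (m k * N k)" .
  qed (use T N_pos in \<open>simp_all add: T_Suc m_def\<close>)
  have "\<exists>\<^sub>\<infinity>t. \<sigma> t = \<alpha>"
    unfolding INFM_nat_le using path(3) seq_suble[OF T(1)] by blast
  then show ?thesis
    using path(3)[of 0] T(2) cesaro_averages_tendsto[OF lim] by (intro that[of \<sigma>] path(1,2)) simp_all
qed

section \<open>The covering graph\<close>

lemma cg_loop_eq_graph_loop:
  "cg_loop h \<tau> F P = graph_loop (cg_vertices h \<tau> F P) (cg_arrow h \<tau> F P)"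
  by (intro ext) (simp add: cg_loop_def graph_loop_def)

lemma path_avg_eq:
  "path_avg h \<tau> F P p \<sigma> = (\<lambda>n. (\<Sum>i<n. real_of_int (cg_weight h \<tau> F P p (\<sigma> i))) / real n)"
  by (simp add: path_avg_def fun_eq_iff)

lemma rho_loop_repeat:
  assumes "cg_loop h \<tau> F P \<alpha> \<gamma> n"
  shows "rho h \<tau> F P p (loop_repeat \<gamma> n) = loop_average (\<lambda>v. of_int (cg_weight h \<tau> F P p v)) \<gamma> n"
proof -
  have "graph_loop (cg_vertices h \<tau> F P) (cg_arrow h \<tau> F P) \<alpha> \<gamma> n"
    using assms by (simp add: cg_loop_eq_graph_loop)
  then show ?thesis
    unfolding rho_def path_avg_eq by (rule limI[OF loop_repeat_averages_tendsto])
qed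

lemma cg_loop_with_rational_rho:
  assumes loop1: "cg_loop h \<tau> F P \<alpha> \<gamma>1 n1" and loop2: "cg_loop h \<tau> F P \<alpha> \<gamma>2 n2" and "r \<in> \<rat>"
    and "rho h \<tau> F P p (loop_repeat \<gamma>1 n1) \<le> r" "r \<le> rho h \<tau> F P p (loop_repeat \<gamma>2 n2)"
  shows "\<exists>\<gamma> n. cg_loop h \<tau> F P \<alpha> \<gamma> n \<and> path_avg h \<tau> F P p (loop_repeat \<gamma> n) \<longlonglongrightarrow> r"
proof -
  let ?w = "\<lambda>v. real_of_int (cg_weight h \<tau> F P p v)"
  have "graph_loop (cg_vertices h \<tau> F P) (cg_arrow h \<tau> F P) \<alpha> \<gamma>1 n1"
    "graph_loop (cg_vertices h \<tau> F P) (cg_arrow h \<tau> F P) \<alpha> \<gamma>2 n2" "r \<in> \<rat>"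
    "loop_average ?w \<gamma>1 n1 \<le> r" "r \<le> loop_average ?w \<gamma>2 n2"
    using assms by (simp_all add: rho_loop_repeat[OF loop1] rho_loop_repeat[OF loop2] cg_loop_eq_graph_loop)
  then obtain \<gamma> n where loop: "graph_loop (cg_vertices h \<tau> F P) (cg_arrow h \<tau> F P) \<alpha> \<gamma> n"
    and average: "loop_average ?w \<gamma> n = r"
    by (rule graph_loop_with_rational_average)
  have "path_avg h \<tau> F P p (loop_repeat \<gamma> n) \<longlonglongrightarrow> r"
    unfolding path_avg_eq using loop_repeat_averages_tendsto[OF loop, of ?w] average by simp
  with loop show ?thesis
    unfolding cg_loop_eq_graph_loop by blast
qed

lemma cg_inf_path_with_limit_rho:
  assumes loops: "\<And>k. cg_loop h \<tau> F P \<alpha> (\<gamma> k) (N k)"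
    and "(\<lambda>k. rho h \<tau> F P p (loop_repeat (\<gamma> k) (N k))) \<longlonglongrightarrow> s"
  shows "\<exists>\<sigma>. cg_inf_path h \<tau> F P \<sigma> \<and> \<sigma> 0 = \<alpha> \<and> (\<exists>\<^sub>\<infinity>n. \<sigma> n = \<alpha>) \<and> path_avg h \<tau> F P p \<sigma> \<longlonglongrightarrow> s"
proof -
  let ?w = "\<lambda>v. real_of_int (cg_weight h \<tau> F P p v)"
  have graph_loops: "\<And>k. graph_loop (cg_vertices h \<tau> F P) (cg_arrow h \<tau> F P) \<alpha> (\<gamma> k) (N k)"
    using loops by (simp add: cg_loop_eq_graph_loop)
  have lim: "(\<lambda>k. loop_average ?w (\<gamma> k) (N k)) \<longlonglongrightarrow> s"
    using assms(2) by (simp add: rho_loop_repeat[OF loops])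
  obtain \<sigma> where "\<And>t. \<sigma> t \<in> cg_vertices h \<tau> F P" "\<And>t. cg_arrow h \<tau> F P (\<sigma> t) (\<sigma> (Suc t))"
    "\<sigma> 0 = \<alpha>" "\<exists>\<^sub>\<infinity>t. \<sigma> t = \<alpha>" "(\<lambda>t. (\<Sum>i<t. ?w (\<sigma> i)) / real t) \<longlonglongrightarrow> s"
    using infinite_path_through_loops[OF graph_loops lim] by blast
  then show ?thesis
    unfolding cg_inf_path_def path_avg_eq by blast
qed

theorem mainTheorem14:
  fixes h :: "real \<Rightarrow> 'a::topological_space" and \<tau> F :: "'a \<Rightarrow> 'a"
    and \<Lambda> :: "'b set" and \<phi> :: "'b \<Rightarrow> real \<Rightarrow> 'a"
    and P :: "'a set set" and lab :: "'a set \<Rightarrow> 'b" and p :: "'a set \<Rightarrow> int"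
  assumes "lifted_graph h \<tau>"
    and "continuous_on UNIV F"
    and "\<forall>x. F (\<tau> x) = \<tau> (F x)"
    and "sun_like h F \<Lambda> \<phi>"
    and "basic_partition h \<tau> F \<Lambda> \<phi> P lab p"
  shows
    "(\<forall>\<alpha> \<gamma>1 n1 \<gamma>2 n2 r.
        cg_loop h \<tau> F P \<alpha> \<gamma>1 n1 \<and> cg_loop h \<tau> F P \<alpha> \<gamma>2 n2 \<and> r \<in> \<rat> \<and>
        rho h \<tau> F P p (loop_repeat \<gamma>1 n1) \<le> r \<and> r \<le> rho h \<tau> F P p (loop_repeat \<gamma>2 n2)
        \<longrightarrow> (\<exists>\<gamma> n. cg_loop h \<tau> F P \<alpha> \<gamma> n \<and>
                    path_avg h \<tau> F P p (loop_repeat \<gamma> n) \<longlonglongrightarrow> r))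
     \<and>
     (\<forall>\<alpha> \<gamma> N s.
        \<alpha> \<in> cg_vertices h \<tau> F P \<and> (\<forall>k. cg_loop h \<tau> F P \<alpha> (\<gamma> k) (N k)) \<and>
        (\<lambda>k. rho h \<tau> F P p (loop_repeat (\<gamma> k) (N k))) \<longlonglongrightarrow> s
        \<longrightarrow> (\<exists>\<sigma>. cg_inf_path h \<tau> F P \<sigma> \<and> \<sigma> 0 = \<alpha> \<and> (\<exists>\<^sub>\<infinity>n. \<sigma> n = \<alpha>) \<and>
                  path_avg h \<tau> F P p \<sigma> \<longlonglongrightarrow> s))"
  by (intro conjI allI impI; elim conjE)
    (auto intro: cg_loop_with_rational_rho cg_inf_path_with_limit_rho)

end
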